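(* Let $(H,\mu,\eta,\Delta,\varepsilon,s)$ be a Hopf algebra in a strict symmetric monoidal category $\mathcal{C}$ which admits a Hopf-Frobenius algebra structure. Then this structure is unique up to invertible scalar: if $(\delta_g,\varepsilon_g,\mu_r,\eta_r)$ and $(\delta_g',\varepsilon_g',\mu_r',\eta_r')$ are two choices of green comonoid and red monoid which, together with green monoid $(\mu,\eta)$, red comonoid $(\Delta,\varepsilon)$ and antipode $s$, form Hopf-Frobenius algebras, then each of $\delta_g',\varepsilon_g',\mu_r',\eta_r'$ is equal to the corresponding morphism $\delta_g,\varepsilon_g,\mu_r,\eta_r$ tensored with some invertible scalar $I\to I$.
   Context: $\mathcal{C}$ is a strict symmetric monoidal category with unit object $I$ and symmetry $\sigma$; scalars are morphisms $I\to I$. A Hopf algebra $(H,\mu,\eta,\Delta,\varepsilon,s)$: an object $H$ with an associative unital monoid $(\mu,\eta)$ and coassociative counital comonoid $(\Delta,\varepsilon)$ satisfying $\Delta\circ\mu=(\mu\otimes\mu)\circ(\mathrm{id}\otimes\sigma_{H,H}\otimes\mathrm{id})\circ(\Delta\otimes\Delta)$, $\Delta\circ\eta=\eta\otimes\eta$, $\varepsilon\circ\mu=\varepsilon\otimes\varepsilon$, $\varepsilon\circ\eta=\mathrm{id}_I$, and an antipode $s$ with $\mu\circ(s\otimes\mathrm{id})\circ\Delta=\eta\circ\varepsilon=\mu\circ(\mathrm{id}\otimes s)\circ\Delta$. A Frobenius algebra is a monoid $(m,u)$ and comonoid $(d,c)$ on the same object with $(\mathrm{id}\otimes m)\circ(d\otimes\mathrm{id})=d\circ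 m=(m\otimes\mathrm{id})\circ(\mathrm{id}\otimes d)$. A pre-Hopf-Frobenius algebra consists of an object $H$ with a green monoid $(\mu_g,\eta_g)$, green comonoid $(\delta_g,\varepsilon_g)$, red monoid $(\mu_r,\eta_r)$, red comonoid $(\delta_r,\varepsilon_r)$ and an endomorphism $s$ such that $(\mu_g,\eta_g,\delta_g,\varepsilon_g)$ and $(\mu_r,\eta_r,\delta_r,\varepsilon_r)$ are Frobenius algebras and $(\mu_g,\eta_g,\delta_r,\varepsilon_r,s)$ is a Hopf algebra. Write $e_g:=\varepsilon_g\circ\mu_g$, $d_g:=\delta_g\circ\eta_g$ (green cup and cap) and $e_r:=\varepsilon_r\circ\mu_r$, $d_r:=\delta_r\circ\eta_r$ (red cup and cap). A Hopf-Frobenius algebra is a pre-Hopf-Frobenius algebra such that $s=(\mathrm{id}_H\otimes e_r)\circ(d_g\otimes\mathrm{id}_H)$ and such that, with $s':=(e_g\otimes\mathrm{id}_H)\circ(\mathrm{id}_H\otimes d_r)$, the tuple $(\mu_r,\eta_r,\delta_g,\varepsilon_g,s')$ is a Hopf algebra. A Hopf algebra $(H,\mu,\eta,\Delta,\varepsilon,s)$ admits a Hopf-Frobenius algebra structure if there exist $\delta_g,\varepsilon_g,\mu_r,\eta_r$ such that the data with green monoid $(\mu,\eta)$, red comonoid $(\Delta,\varepsilon)$ and antipode $s$ is a Hopf-Frobenius algebra. *)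

theory Defs
  imports Main
begin

text \<open>Composition: mc_cmp C g f is g after f.\<close>

record ('o, 'm) smcat =
  mc_ob  :: "'o set"
  mc_ar  :: "'m set"
  mc_src :: "'m \<Rightarrow> 'o"
  mc_tgt :: "'m \<Rightarrow> 'o"
  mc_idm :: "'o \<Rightarrow> 'm"
  mc_cmp :: "'m \<Rightarrow> 'm \<Rightarrow> 'm"
  mc_tob :: "'o \<Rightarrow> 'o \<Rightarrow> 'o"
  mc_tar :: "'m \<Rightarrow> 'm \<Rightarrow> 'm"
  mc_unt :: "'o"
  mc_sym :: "'o \<Rightarrow> 'o \<Rightarrow> 'm"

abbreviation mc_comp :: "'m \<Rightarrow> ('o,'m) smcat \<Rightarrow> 'm \<Rightarrow> 'm"
  ("(_ \<cdot>\<^bsub>_\<^esub>/ _)" [70, 0, 71] 70) where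
  "g \<cdot>\<^bsub>C\<^esub> f \<equiv> mc_cmp C g f"

abbreviation mc_tens :: "'m \<Rightarrow> ('o,'m) smcat \<Rightarrow> 'm \<Rightarrow> 'm"
  ("(_ \<otimes>\<^bsub>_\<^esub>/ _)" [75, 0, 76] 75) where
  "f \<otimes>\<^bsub>C\<^esub> g \<equiv> mc_tar C f g"

definition mc_hom :: "('o,'m) smcat \<Rightarrow> 'm \<Rightarrow> 'o \<Rightarrow> 'o \<Rightarrow> bool" where
  "mc_hom C f a b \<longleftrightarrow> f \<in> mc_ar C \<and> mc_src C f = a \<and> mc_tgt C f = b"

definition strict_smc :: "('o,'m) smcat \<Rightarrow> bool" where
  "strict_smc C \<longleftrightarrow>
    \<comment> \<open>category\<close>
    (\<forall>f \<in> mc_ar C. mc_src C f \<in> mc_ob C \<and> mc_tgt C f \<in> mc_ob C) \<and>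
    (\<forall>a \<in> mc_ob C. mc_hom C (mc_idm C a) a a) \<and>
    (\<forall>f g. f \<in> mc_ar C \<and> g \<in> mc_ar C \<and> mc_tgt C f = mc_src C g \<longrightarrow>
        mc_hom C (mc_cmp C g f) (mc_src C f) (mc_tgt C g)) \<and>
    (\<forall>f g h. f \<in> mc_ar C \<and> g \<in> mc_ar C \<and> h \<in> mc_ar C \<and>
        mc_tgt C f = mc_src C g \<and> mc_tgt C g = mc_src C h \<longrightarrow>
        mc_cmp C h (mc_cmp C g f) = mc_cmp C (mc_cmp C h g) f) \<and>
    (\<forall>f \<in> mc_ar C. mc_cmp C (mc_idm C (mc_tgt C f)) f = f \<and>
                    mc_cmp C f (mc_idm C (mc_src C f)) = f) \<and>
    \<comment> \<open>tensor is a bifunctor\<close>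
    (\<forall>a \<in> mc_ob C. \<forall>b \<in> mc_ob C. mc_tob C a b \<in> mc_ob C) \<and>
    (\<forall>f \<in> mc_ar C. \<forall>g \<in> mc_ar C. mc_hom C (mc_tar C f g)
        (mc_tob C (mc_src C f) (mc_src C g)) (mc_tob C (mc_tgt C f) (mc_tgt C g))) \<and>
    (\<forall>a \<in> mc_ob C. \<forall>b \<in> mc_ob C.
        mc_tar C (mc_idm C a) (mc_idm C b) = mc_idm C (mc_tob C a b)) \<and>
    (\<forall>f g f' g'. f \<in> mc_ar C \<and> g \<in> mc_ar C \<and> f' \<in> mc_ar C \<and> g' \<in> mc_ar C \<and>
        mc_tgt C f = mc_src C g \<and> mc_tgt C f' = mc_src C g' \<longrightarrow>
        mc_tar C (mc_cmp C g f) (mc_cmp C g' f') =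
        mc_cmp C (mc_tar C g g') (mc_tar C f f')) \<and>
    \<comment> \<open>strictness\<close>
    mc_unt C \<in> mc_ob C \<and>
    (\<forall>a \<in> mc_ob C. \<forall>b \<in> mc_ob C. \<forall>c \<in> mc_ob C.
        mc_tob C (mc_tob C a b) c = mc_tob C a (mc_tob C b c)) \<and>
    (\<forall>a \<in> mc_ob C. mc_tob C (mc_unt C) a = a \<and> mc_tob C a (mc_unt C) = a) \<and>
    (\<forall>f \<in> mc_ar C. \<forall>g \<in> mc_ar C. \<forall>h \<in> mc_ar C.
        mc_tar C (mc_tar C f g) h = mc_tar C f (mc_tar C g h)) \<and>
    (\<forall>f \<in> mc_ar C. mc_tar C (mc_idm C (mc_unt C)) f = f \<and>
                    mc_tar C f (mc_idm C (mc_unt C)) = f) \<and>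
    \<comment> \<open>symmetry\<close>
    (\<forall>a \<in> mc_ob C. \<forall>b \<in> mc_ob C.
        mc_hom C (mc_sym C a b) (mc_tob C a b) (mc_tob C b a)) \<and>
    (\<forall>f \<in> mc_ar C. \<forall>g \<in> mc_ar C.
        mc_cmp C (mc_tar C g f) (mc_sym C (mc_src C f) (mc_src C g)) =
        mc_cmp C (mc_sym C (mc_tgt C f) (mc_tgt C g)) (mc_tar C f g)) \<and>
    (\<forall>a \<in> mc_ob C. \<forall>b \<in> mc_ob C.
        mc_cmp C (mc_sym C b a) (mc_sym C a b) = mc_idm C (mc_tob C a b)) \<and>
    (\<forall>a \<in> mc_ob C. \<forall>b \<in> mc_ob C. \<forall>c \<in> mc_ob C.
        mc_sym C a (mc_tob C b c) =
        mc_cmp C (mc_tar C (mc_idm C b) (mc_sym C a c))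
                 (mc_tar C (mc_sym C a b) (mc_idm C c)))"

definition is_monoid :: "('o,'m) smcat \<Rightarrow> 'o \<Rightarrow> 'm \<Rightarrow> 'm \<Rightarrow> bool" where
  "is_monoid C H m u \<longleftrightarrow>
    (let i = mc_idm C H in
     H \<in> mc_ob C \<and> mc_hom C m (mc_tob C H H) H \<and> mc_hom C u (mc_unt C) H \<and>
     m \<cdot>\<^bsub>C\<^esub> (m \<otimes>\<^bsub>C\<^esub> i) = m \<cdot>\<^bsub>C\<^esub> (i \<otimes>\<^bsub>C\<^esub> m) \<and>
     m \<cdot>\<^bsub>C\<^esub> (u \<otimes>\<^bsub>C\<^esub> i) = i \<and> m \<cdot>\<^bsub>C\<^esub> (i \<otimes>\<^bsub>C\<^esub> u) = i)"

definition is_comonoid :: "('o,'m) smcat \<Rightarrow> 'o \<Rightarrow> 'm \<Rightarrow> 'm \<Rightarrow> bool" where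
  "is_comonoid C H d e \<longleftrightarrow>
    (let i = mc_idm C H in
     H \<in> mc_ob C \<and> mc_hom C d H (mc_tob C H H) \<and> mc_hom C e H (mc_unt C) \<and>
     (d \<otimes>\<^bsub>C\<^esub> i) \<cdot>\<^bsub>C\<^esub> d = (i \<otimes>\<^bsub>C\<^esub> d) \<cdot>\<^bsub>C\<^esub> d \<and>
     (e \<otimes>\<^bsub>C\<^esub> i) \<cdot>\<^bsub>C\<^esub> d = i \<and> (i \<otimes>\<^bsub>C\<^esub> e) \<cdot>\<^bsub>C\<^esub> d = i)"

definition is_frobenius :: "('o,'m) smcat \<Rightarrow> 'o \<Rightarrow> 'm \<Rightarrow> 'm \<Rightarrow> 'm \<Rightarrow> 'm \<Rightarrow> bool" where
  "is_frobenius C H m u d e \<longleftrightarrow>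
    (let i = mc_idm C H in
     is_monoid C H m u \<and> is_comonoid C H d e \<and>
     (i \<otimes>\<^bsub>C\<^esub> m) \<cdot>\<^bsub>C\<^esub> (d \<otimes>\<^bsub>C\<^esub> i) = d \<cdot>\<^bsub>C\<^esub> m \<and>
     d \<cdot>\<^bsub>C\<^esub> m = (m \<otimes>\<^bsub>C\<^esub> i) \<cdot>\<^bsub>C\<^esub> (i \<otimes>\<^bsub>C\<^esub> d))"

definition is_hopf :: "('o,'m) smcat \<Rightarrow> 'o \<Rightarrow> 'm \<Rightarrow> 'm \<Rightarrow> 'm \<Rightarrow> 'm \<Rightarrow> 'm \<Rightarrow> bool" where
  "is_hopf C H m u d e s \<longleftrightarrow>
    (let i = mc_idm C H in
     is_monoid C H m u \<and> is_comonoid C H d e \<and> mc_hom C s H H \<and>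
     d \<cdot>\<^bsub>C\<^esub> m = (m \<otimes>\<^bsub>C\<^esub> m) \<cdot>\<^bsub>C\<^esub> (i \<otimes>\<^bsub>C\<^esub> mc_sym C H H \<otimes>\<^bsub>C\<^esub> i) \<cdot>\<^bsub>C\<^esub> (d \<otimes>\<^bsub>C\<^esub> d) \<and>
     d \<cdot>\<^bsub>C\<^esub> u = u \<otimes>\<^bsub>C\<^esub> u \<and>
     e \<cdot>\<^bsub>C\<^esub> m = e \<otimes>\<^bsub>C\<^esub> e \<and>
     e \<cdot>\<^bsub>C\<^esub> u = mc_idm C (mc_unt C) \<and>
     m \<cdot>\<^bsub>C\<^esub> (s \<otimes>\<^bsub>C\<^esub> i) \<cdot>\<^bsub>C\<^esub> d = u \<cdot>\<^bsub>C\<^esub> e \<and>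
     m \<cdot>\<^bsub>C\<^esub> (i \<otimes>\<^bsub>C\<^esub> s) \<cdot>\<^bsub>C\<^esub> d = u \<cdot>\<^bsub>C\<^esub> e)"

text \<open>Pre-Hopf-Frobenius and Hopf-Frobenius algebras.  Argument order:
green monoid (mu_g, eta_g), green comonoid (delta_g, eps_g),
red monoid (mu_r, eta_r), red comonoid (delta_r, eps_r), antipode s.\<close>

definition pre_hopf_frobenius ::
  "('o,'m) smcat \<Rightarrow> 'o \<Rightarrow> 'm \<Rightarrow> 'm \<Rightarrow> 'm \<Rightarrow> 'm \<Rightarrow> 'm \<Rightarrow> 'm \<Rightarrow> 'm \<Rightarrow> 'm \<Rightarrow> 'm \<Rightarrow> bool" where
  "pre_hopf_frobenius C H mug etag dg eg mur etar dr er s \<longleftrightarrow>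
    is_frobenius C H mug etag dg eg \<and> is_frobenius C H mur etar dr er \<and>
    is_hopf C H mug etag dr er s"

definition hopf_frobenius ::
  "('o,'m) smcat \<Rightarrow> 'o \<Rightarrow> 'm \<Rightarrow> 'm \<Rightarrow> 'm \<Rightarrow> 'm \<Rightarrow> 'm \<Rightarrow> 'm \<Rightarrow> 'm \<Rightarrow> 'm \<Rightarrow> 'm \<Rightarrow> bool" where
  "hopf_frobenius C H mug etag dg eg mur etar dr er s \<longleftrightarrow>
    (let i = mc_idm C H;
         cup_g = eg \<cdot>\<^bsub>C\<^esub> mug; cap_g = dg \<cdot>\<^bsub>C\<^esub> etag;
         cup_r = er \<cdot>\<^bsub>C\<^esub> mur; cap_r = dr \<cdot>\<^bsub>C\<^esub> etar;
         s' = (cup_g \<otimes>\<^bsub>C\<^esub> i) \<cdot>\<^bsub>C\<^esub> (i \<otimes>\<^bsub>C\<^esub> cap_r) in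
     pre_hopf_frobenius C H mug etag dg eg mur etar dr er s \<and>
     s = (i \<otimes>\<^bsub>C\<^esub> cup_r) \<cdot>\<^bsub>C\<^esub> (cap_g \<otimes>\<^bsub>C\<^esub> i) \<and>
     is_hopf C H mur etar dg eg s')"

definition invertible_scalar :: "('o,'m) smcat \<Rightarrow> 'm \<Rightarrow> bool" where
  "invertible_scalar C l \<longleftrightarrow> mc_hom C l (mc_unt C) (mc_unt C) \<and>
    (\<exists>l'. mc_hom C l' (mc_unt C) (mc_unt C) \<and>
          mc_cmp C l l' = mc_idm C (mc_unt C) \<and> mc_cmp C l' l = mc_idm C (mc_unt C))"

end

theory Submission
  imports Defs
begin

(* The red cup is the green cup twisted by the antipode, eps \<circ> mu_r = eg \<circ> mu \<circ> (id \<otimes> s),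
   and s fixes the unit \<eta>. Pairing with the red cup therefore sends (id \<otimes> \<phi>) \<circ> \<Delta> to
   \<phi> \<circ> mu_r and \<eta> \<circ> \<phi> to eg \<otimes> \<phi>, for every \<phi> : H \<rightarrow> I. Since this pairing is injective
   (snake equation) and eg \<circ> mu_r = eg \<otimes> eg, the green counit eg is an integral; and every
   integral \<phi> satisfies \<phi> \<circ> mu_r = eg \<otimes> \<phi>, hence \<phi> = eg \<otimes> (\<phi> \<circ> eta_r). So a second green counit
   is eg' = eg \<otimes> l with l = eg' \<circ> eta_r, invertible because eg \<circ> eta_r = id_I on both sides.
   The other structure maps are determined by eg and the fixed Hopf data: mu_r by its cup,
   eta_r by mu_r, and delta_g by its cap delta_g \<circ> \<eta> = (s \<otimes> id) \<circ> \<Delta> \<circ> eta_r; so they are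
   rescaled by l or by its inverse. *)

locale smc = fixes C :: "('o,'m) smcat" assumes smc: "strict_smc C"
begin

abbreviation "ar \<equiv> mc_ar C"
abbreviation "ob \<equiv> mc_ob C"
abbreviation "src \<equiv> mc_src C"
abbreviation "tgt \<equiv> mc_tgt C"
abbreviation "idm \<equiv> mc_idm C"
abbreviation "U \<equiv> mc_unt C"
abbreviation "tob \<equiv> mc_tob C"
abbreviation cp (infixr "\<bullet>" 55) where "g \<bullet> f \<equiv> mc_cmp C g f"
abbreviation tn (infixr "\<odot>" 65) where "f \<odot> g \<equiv> mc_tar C f g"

lemma src_ob [simp]: "f \<in> ar \<Longrightarrow> src f \<in> ob"
  and tgt_ob [simp]: "f \<in> ar \<Longrightarrow> tgt f \<in> ob"
  using smc unfolding strict_smc_def by auto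

lemma id_ar [simp]: "a \<in> ob \<Longrightarrow> idm a \<in> ar"
  and id_src [simp]: "a \<in> ob \<Longrightarrow> src (idm a) = a"
  and id_tgt [simp]: "a \<in> ob \<Longrightarrow> tgt (idm a) = a"
  using smc unfolding strict_smc_def mc_hom_def by auto

lemma cp_ar [simp]: "f \<in> ar \<Longrightarrow> g \<in> ar \<Longrightarrow> tgt f = src g \<Longrightarrow> g \<bullet> f \<in> ar"
  and cp_src [simp]: "f \<in> ar \<Longrightarrow> g \<in> ar \<Longrightarrow> tgt f = src g \<Longrightarrow> src (g \<bullet> f) = src f"
  and cp_tgt [simp]: "f \<in> ar \<Longrightarrow> g \<in> ar \<Longrightarrow> tgt f = src g \<Longrightarrow> tgt (g \<bullet> f) = tgt g"
  using smc unfolding strict_smc_def mc_hom_def by auto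

lemma cp_assoc [simp]:
  "f \<in> ar \<Longrightarrow> g \<in> ar \<Longrightarrow> h \<in> ar \<Longrightarrow> tgt f = src g \<Longrightarrow> tgt g = src h \<Longrightarrow>
   (h \<bullet> g) \<bullet> f = h \<bullet> (g \<bullet> f)"
  using smc unfolding strict_smc_def by metis

lemma id_left [simp]: "f \<in> ar \<Longrightarrow> tgt f = a \<Longrightarrow> idm a \<bullet> f = f"
  and id_right [simp]: "f \<in> ar \<Longrightarrow> src f = a \<Longrightarrow> f \<bullet> idm a = f"
  using smc unfolding strict_smc_def by auto

lemma tob_ob [simp]: "a \<in> ob \<Longrightarrow> b \<in> ob \<Longrightarrow> tob a b \<in> ob"
  using smc unfolding strict_smc_def by auto

lemma tn_ar [simp]: "f \<in> ar \<Longrightarrow> g \<in> ar \<Longrightarrow> f \<odot> g \<in> ar"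
  and tn_src [simp]: "f \<in> ar \<Longrightarrow> g \<in> ar \<Longrightarrow> src (f \<odot> g) = tob (src f) (src g)"
  and tn_tgt [simp]: "f \<in> ar \<Longrightarrow> g \<in> ar \<Longrightarrow> tgt (f \<odot> g) = tob (tgt f) (tgt g)"
  using smc unfolding strict_smc_def mc_hom_def by auto

lemma tn_id: "a \<in> ob \<Longrightarrow> b \<in> ob \<Longrightarrow> idm a \<odot> idm b = idm (tob a b)"
  using smc unfolding strict_smc_def by auto

lemma interchange:
  assumes "f \<in> ar" "g \<in> ar" "f' \<in> ar" "g' \<in> ar" "tgt f = src g" "tgt f' = src g'"
  shows "(g \<bullet> f) \<odot> (g' \<bullet> f') = (g \<odot> g') \<bullet> (f \<odot> f')"
proof -
  from smc have "\<forall>f g f' g'. f \<in> ar \<and> g \<in> ar \<and> f' \<in> ar \<and> g' \<in> ar \<and>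
      tgt f = src g \<and> tgt f' = src g' \<longrightarrow> (g \<bullet> f) \<odot> (g' \<bullet> f') = (g \<odot> g') \<bullet> (f \<odot> f')"
    unfolding strict_smc_def by (elim conjE) assumption
  then show ?thesis using assms by blast
qed

lemma U_ob [simp]: "U \<in> ob"
  using smc unfolding strict_smc_def by auto

lemma tob_assoc [simp]:
  "a \<in> ob \<Longrightarrow> b \<in> ob \<Longrightarrow> c \<in> ob \<Longrightarrow> tob (tob a b) c = tob a (tob b c)"
  using smc unfolding strict_smc_def by auto

lemma tob_U [simp]: "a \<in> ob \<Longrightarrow> tob U a = a" "a \<in> ob \<Longrightarrow> tob a U = a"
  using smc unfolding strict_smc_def by auto

lemma tn_assoc [simp]: "f \<in> ar \<Longrightarrow> g \<in> ar \<Longrightarrow> h \<in> ar \<Longrightarrow> (f \<odot> g) \<odot> h = f \<odot> (g \<odot> h)"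
  using smc unfolding strict_smc_def by auto

lemma tn_U [simp]: "f \<in> ar \<Longrightarrow> idm U \<odot> f = f" "f \<in> ar \<Longrightarrow> f \<odot> idm U = f"
  using smc unfolding strict_smc_def by auto

lemma id_tob_tn [simp]:
  "a \<in> ob \<Longrightarrow> b \<in> ob \<Longrightarrow> f \<in> ar \<Longrightarrow> idm (tob a b) \<odot> f = idm a \<odot> (idm b \<odot> f)"
  by (simp add: tn_id [symmetric])

lemma tn_id_tob [simp]:
  "a \<in> ob \<Longrightarrow> b \<in> ob \<Longrightarrow> f \<in> ar \<Longrightarrow> f \<odot> idm (tob a b) = f \<odot> (idm a \<odot> idm b)"
  by (simp add: tn_id)

lemma whisker_left:
  "a \<in> ob \<Longrightarrow> f \<in> ar \<Longrightarrow> g \<in> ar \<Longrightarrow> tgt f = src g \<Longrightarrow>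
   idm a \<odot> (g \<bullet> f) = (idm a \<odot> g) \<bullet> (idm a \<odot> f)"
  using interchange [of "idm a" "idm a" f g] by simp

lemma whisker_right:
  "a \<in> ob \<Longrightarrow> f \<in> ar \<Longrightarrow> g \<in> ar \<Longrightarrow> tgt f = src g \<Longrightarrow>
   (g \<bullet> f) \<odot> idm a = (g \<odot> idm a) \<bullet> (f \<odot> idm a)"
  using interchange [of f g "idm a" "idm a"] by simp

lemma tn_eq_right_then_left:
  "f \<in> ar \<Longrightarrow> g \<in> ar \<Longrightarrow> f \<odot> g = (f \<odot> idm (tgt g)) \<bullet> (idm (src f) \<odot> g)"
  using interchange [of "idm (src f)" f g "idm (tgt g)"] by simp

lemma tn_eq_left_then_right:
  "f \<in> ar \<Longrightarrow> g \<in> ar \<Longrightarrow> f \<odot> g = (idm (tgt f) \<odot> g) \<bullet> (f \<odot> idm (src g))"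
  using interchange [of f "idm (tgt f)" "idm (src g)" g] by simp

definition scalar :: "'m \<Rightarrow> bool" where
  "scalar l \<longleftrightarrow> l \<in> ar \<and> src l = U \<and> tgt l = U"

lemma scalar_tn_eq_cp: "scalar k \<Longrightarrow> scalar l \<Longrightarrow> k \<odot> l = k \<bullet> l"
  using tn_eq_right_then_left [of k l] by (simp add: scalar_def)

lemma cp_tn_scalar_left:
  "f \<in> ar \<Longrightarrow> g \<in> ar \<Longrightarrow> tgt f = src g \<Longrightarrow> scalar l \<Longrightarrow> (g \<odot> l) \<bullet> f = (g \<bullet> f) \<odot> l"
  using interchange [of f g "idm U" l] by (simp add: scalar_def)

lemma cp_tn_scalar_right:
  "f \<in> ar \<Longrightarrow> g \<in> ar \<Longrightarrow> tgt f = src g \<Longrightarrow> scalar l \<Longrightarrow> g \<bullet> (f \<odot> l) = (g \<bullet> f) \<odot> l"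
  using interchange [of f g l "idm U"] by (simp add: scalar_def)

lemma invertible_scalarI:
  assumes "scalar l" "scalar l'" "l \<odot> l' = idm U" "l' \<odot> l = idm U"
  shows "invertible_scalar C l"
  using assms scalar_tn_eq_cp [of l l'] scalar_tn_eq_cp [of l' l]
  unfolding invertible_scalar_def mc_hom_def scalar_def by auto

lemma is_monoidD:
  assumes "is_monoid C H m u"
  shows "H \<in> ob" "m \<in> ar" "src m = tob H H" "tgt m = H" "u \<in> ar" "src u = U" "tgt u = H"
    and "m \<bullet> (m \<odot> idm H) = m \<bullet> (idm H \<odot> m)"
    and "m \<bullet> (u \<odot> idm H) = idm H" "m \<bullet> (idm H \<odot> u) = idm H"
  using assms unfolding is_monoid_def Let_def mc_hom_def by auto

lemma is_comonoidD:
  assumes "is_comonoid C H d e"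
  shows "H \<in> ob" "d \<in> ar" "src d = H" "tgt d = tob H H" "e \<in> ar" "src e = H" "tgt e = U"
    and "(d \<odot> idm H) \<bullet> d = (idm H \<odot> d) \<bullet> d"
    and "(e \<odot> idm H) \<bullet> d = idm H" "(idm H \<odot> e) \<bullet> d = idm H"
  using assms unfolding is_comonoid_def Let_def mc_hom_def by auto

lemma is_hopfD:
  assumes "is_hopf C H m u d e s"
  shows "is_monoid C H m u" "is_comonoid C H d e" "s \<in> ar" "src s = H" "tgt s = H"
    and "d \<bullet> u = u \<odot> u" "e \<bullet> m = e \<odot> e" "e \<bullet> u = idm U"
    and "m \<bullet> (s \<odot> idm H) \<bullet> d = u \<bullet> e" "m \<bullet> (idm H \<odot> s) \<bullet> d = u \<bullet> e"
  using assms unfolding is_hopf_def Let_def mc_hom_def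
  by (auto simp: is_monoid_def is_comonoid_def mc_hom_def Let_def)

lemma monoid_unit_rescale:
  assumes "is_monoid C H m u" "is_monoid C H m' u'" "m' = m \<odot> l" "scalar l"
  shows "u = u' \<odot> l"
proof -
  note M = is_monoidD [OF assms(1)] and M' = is_monoidD [OF assms(2)]
  note [simp] = M(1-7) M'(1-7)
  have "u = (m' \<bullet> (u' \<odot> idm H)) \<bullet> u" using M'(9) by simp
  also have "\<dots> = m' \<bullet> (u' \<odot> u)" using tn_eq_right_then_left [of u' u] by simp
  also have "\<dots> = (m \<bullet> (u' \<odot> u)) \<odot> l" using assms(3,4) by (simp add: cp_tn_scalar_left)
  also have "m \<bullet> (u' \<odot> u) = (m \<bullet> (idm H \<odot> u)) \<bullet> u'" using tn_eq_left_then_right [of u' u] by simp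
  finally show ?thesis using M(10) by simp
qed

lemma hopf_antipode_unit:
  assumes "is_hopf C H m u d e s"
  shows "s \<bullet> u = u"
proof -
  note Hp = is_hopfD [OF assms]
  note M = is_monoidD [OF Hp(1)] and D = is_comonoidD [OF Hp(2)]
  note [simp] = M(1-7) D(1-7) Hp(3-5)
  have "u = (u \<bullet> e) \<bullet> u" by (simp add: Hp(8))
  also have "\<dots> = (m \<bullet> (s \<odot> idm H) \<bullet> d) \<bullet> u" by (simp only: Hp(9))
  also have "\<dots> = m \<bullet> (s \<odot> idm H) \<bullet> (u \<odot> u)" by (simp add: Hp(6))
  also have "(s \<odot> idm H) \<bullet> (u \<odot> u) = (idm H \<odot> u) \<bullet> (s \<bullet> u)"
    using interchange [of u s u "idm H"] tn_eq_left_then_right [of "s \<bullet> u" u] by simp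
  also have "m \<bullet> (idm H \<odot> u) \<bullet> (s \<bullet> u) = s \<bullet> u"
    using M(10) by (simp flip: cp_assoc)
  finally show ?thesis by simp
qed

lemma snake_pairing_inj:
  assumes snake: "(idm H \<odot> e) \<bullet> (d \<odot> idm H) = idm H"
    and types: "H \<in> ob" "e \<in> ar" "src e = tob H H" "tgt e = U" "d \<in> ar" "src d = U" "tgt d = tob H H"
      "z \<in> ar" "src z = H" "tgt z = H" "z' \<in> ar" "src z' = H" "tgt z' = H"
    and pairing: "e \<bullet> (idm H \<odot> z) = e \<bullet> (idm H \<odot> z')"
  shows "z = z'"
proof -
  note [simp] = types
  have transpose: "y = (idm H \<odot> (e \<bullet> (idm H \<odot> y))) \<bullet> (d \<odot> idm H)"
    if "y \<in> ar" "src y = H" "tgt y = H" for y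
  proof -
    have "y = ((idm H \<odot> e) \<bullet> (d \<odot> idm H)) \<bullet> y" using snake that by simp
    also have "\<dots> = (idm H \<odot> e) \<bullet> (d \<odot> y)" using tn_eq_right_then_left [of d y] that by simp
    also have "\<dots> = (idm H \<odot> e) \<bullet> (idm H \<odot> (idm H \<odot> y)) \<bullet> (d \<odot> idm H)"
      using tn_eq_left_then_right [of d y] that by simp
    also have "\<dots> = (idm H \<odot> (e \<bullet> (idm H \<odot> y))) \<bullet> (d \<odot> idm H)"
      using that by (simp add: whisker_left)
    finally show ?thesis .
  qed
  show ?thesis using transpose [of z] transpose [of z'] pairing by simp
qed

end

locale frobenius_algebra = smc +
  fixes H m u d e
  assumes frobenius: "is_frobenius C H m u d e"
begin

lemma monoid: "is_monoid C H m u"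
  and comonoid: "is_comonoid C H d e"
  and frobenius_left: "(idm H \<odot> m) \<bullet> (d \<odot> idm H) = d \<bullet> m"
  and frobenius_right: "(m \<odot> idm H) \<bullet> (idm H \<odot> d) = d \<bullet> m"
  using frobenius unfolding is_frobenius_def Let_def by auto

lemmas typing [simp] = is_monoidD(1-7) [OF monoid] is_comonoidD(2-7) [OF comonoid]

lemma mult_from_cup_left: "m = (idm H \<odot> (e \<bullet> m)) \<bullet> (d \<odot> idm H)"
proof -
  have "(idm H \<odot> (e \<bullet> m)) \<bullet> (d \<odot> idm H) = (idm H \<odot> e) \<bullet> (idm H \<odot> m) \<bullet> (d \<odot> idm H)"
    by (simp add: whisker_left)
  also have "\<dots> = ((idm H \<odot> e) \<bullet> d) \<bullet> m" by (simp add: frobenius_left)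
  finally show ?thesis using is_comonoidD(10) [OF comonoid] by simp
qed

lemma mult_from_cup_right: "m = ((e \<bullet> m) \<odot> idm H) \<bullet> (idm H \<odot> d)"
proof -
  have "((e \<bullet> m) \<odot> idm H) \<bullet> (idm H \<odot> d) = (e \<odot> idm H) \<bullet> (m \<odot> idm H) \<bullet> (idm H \<odot> d)"
    by (simp add: whisker_right)
  also have "\<dots> = ((e \<odot> idm H) \<bullet> d) \<bullet> m" by (simp add: frobenius_right)
  finally show ?thesis using is_comonoidD(9) [OF comonoid] by simp
qed

lemma comult_from_cap: "d = (m \<odot> idm H) \<bullet> (idm H \<odot> (d \<bullet> u))"
proof -
  have "(m \<odot> idm H) \<bullet> (idm H \<odot> (d \<bullet> u)) = ((m \<odot> idm H) \<bullet> (idm H \<odot> d)) \<bullet> (idm H \<odot> u)"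
    by (simp add: whisker_left)
  also have "\<dots> = d \<bullet> (m \<bullet> (idm H \<odot> u))" by (simp add: frobenius_right)
  finally show ?thesis using is_monoidD(10) [OF monoid] by simp
qed

lemma snake_left: "(idm H \<odot> (e \<bullet> m)) \<bullet> ((d \<bullet> u) \<odot> idm H) = idm H"
proof -
  have "(idm H \<odot> (e \<bullet> m)) \<bullet> ((d \<bullet> u) \<odot> idm H)
      = ((idm H \<odot> (e \<bullet> m)) \<bullet> (d \<odot> idm H)) \<bullet> (u \<odot> idm H)"
    by (simp add: whisker_right)
  then show ?thesis using mult_from_cup_left is_monoidD(9) [OF monoid] by simp
qed

lemma snake_right: "((e \<bullet> m) \<odot> idm H) \<bullet> (idm H \<odot> (d \<bullet> u)) = idm H"
proof -
  have "((e \<bullet> m) \<odot> idm H) \<bullet> (idm H \<odot> (d \<bullet> u))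
      = (((e \<bullet> m) \<odot> idm H) \<bullet> (idm H \<odot> d)) \<bullet> (idm H \<odot> u)"
    by (simp add: whisker_left)
  then show ?thesis using mult_from_cup_right is_monoidD(10) [OF monoid] by simp
qed

lemma cup_pairing_inj:
  "z \<in> ar \<Longrightarrow> src z = H \<Longrightarrow> tgt z = H \<Longrightarrow> z' \<in> ar \<Longrightarrow> src z' = H \<Longrightarrow> tgt z' = H \<Longrightarrow>
   e \<bullet> m \<bullet> (idm H \<odot> z) = e \<bullet> m \<bullet> (idm H \<odot> z') \<Longrightarrow> z = z'"
  by (rule snake_pairing_inj [OF snake_left]) simp_all

end

locale hopf_frobenius_algebra = smc +
  fixes H mu eta dg eg mur etar Delta eps s
  assumes hopf_frobenius: "hopf_frobenius C H mu eta dg eg mur etar Delta eps s"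
begin

lemma green_frobenius: "is_frobenius C H mu eta dg eg"
  and red_frobenius: "is_frobenius C H mur etar Delta eps"
  and hopf: "is_hopf C H mu eta Delta eps s"
  and antipode_eq: "s = (idm H \<odot> (eps \<bullet> mur)) \<bullet> ((dg \<bullet> eta) \<odot> idm H)"
  and dual_hopf: "is_hopf C H mur etar dg eg (((eg \<bullet> mu) \<odot> idm H) \<bullet> (idm H \<odot> (Delta \<bullet> etar)))"
  using hopf_frobenius unfolding hopf_frobenius_def pre_hopf_frobenius_def Let_def by auto

sublocale green: frobenius_algebra C H mu eta dg eg
  by unfold_locales (rule green_frobenius)

sublocale red: frobenius_algebra C H mur etar Delta eps
  by unfold_locales (rule red_frobenius)

lemmas antipode_typing [simp] = is_hopfD(3-5) [OF hopf]

lemma red_cup_eq: "eps \<bullet> mur = eg \<bullet> mu \<bullet> (idm H \<odot> s)"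
proof -
  have slide_right: "(eg \<bullet> mu) \<odot> (eps \<bullet> mur) = eg \<bullet> mu \<bullet> (idm H \<odot> (idm H \<odot> (eps \<bullet> mur)))"
    using tn_eq_right_then_left [of "eg \<bullet> mu" "eps \<bullet> mur"] by simp
  have slide_left: "(eg \<bullet> mu) \<odot> (eps \<bullet> mur) = eps \<bullet> mur \<bullet> ((eg \<bullet> mu) \<odot> (idm H \<odot> idm H))"
    using tn_eq_left_then_right [of "eg \<bullet> mu" "eps \<bullet> mur"] by simp
  have snake: "((eg \<bullet> mu) \<odot> (idm H \<odot> idm H)) \<bullet> (idm H \<odot> ((dg \<bullet> eta) \<odot> idm H)) = idm H \<odot> idm H"
    using whisker_right [of H "idm H \<odot> (dg \<bullet> eta)" "(eg \<bullet> mu) \<odot> idm H"] green.snake_right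
    by simp
  have "eg \<bullet> mu \<bullet> (idm H \<odot> s)
      = eg \<bullet> mu \<bullet> (idm H \<odot> (idm H \<odot> (eps \<bullet> mur))) \<bullet> (idm H \<odot> ((dg \<bullet> eta) \<odot> idm H))"
    by (subst antipode_eq) (simp add: whisker_left)
  also have "\<dots> = ((eg \<bullet> mu) \<odot> (eps \<bullet> mur)) \<bullet> (idm H \<odot> ((dg \<bullet> eta) \<odot> idm H))"
    using slide_right by simp
  also have "\<dots> = eps \<bullet> mur \<bullet> ((eg \<bullet> mu) \<odot> (idm H \<odot> idm H)) \<bullet> (idm H \<odot> ((dg \<bullet> eta) \<odot> idm H))"
    using slide_left by simp
  also have "\<dots> = eps \<bullet> mur"
    by (simp only: snake) (simp add: tn_id)
  finally show ?thesis by simp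
qed

lemma green_cap_eq: "dg \<bullet> eta = (s \<odot> idm H) \<bullet> Delta \<bullet> etar"
proof -
  have slide_right: "(dg \<bullet> eta) \<odot> (Delta \<bullet> etar) = ((dg \<bullet> eta) \<odot> (idm H \<odot> idm H)) \<bullet> Delta \<bullet> etar"
    using tn_eq_right_then_left [of "dg \<bullet> eta" "Delta \<bullet> etar"] by simp
  have slide_left: "(dg \<bullet> eta) \<odot> (Delta \<bullet> etar) = (idm H \<odot> (idm H \<odot> (Delta \<bullet> etar))) \<bullet> dg \<bullet> eta"
    using tn_eq_left_then_right [of "dg \<bullet> eta" "Delta \<bullet> etar"] by simp
  have snake: "(idm H \<odot> ((eps \<bullet> mur) \<odot> idm H)) \<bullet> (idm H \<odot> (idm H \<odot> (Delta \<bullet> etar))) = idm H \<odot> idm H"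
    using whisker_left [of H "idm H \<odot> (Delta \<bullet> etar)" "(eps \<bullet> mur) \<odot> idm H"] red.snake_right
    by simp
  have "s \<odot> idm H = (idm H \<odot> ((eps \<bullet> mur) \<odot> idm H)) \<bullet> ((dg \<bullet> eta) \<odot> (idm H \<odot> idm H))"
    using whisker_right [of H "(dg \<bullet> eta) \<odot> idm H" "idm H \<odot> (eps \<bullet> mur)"]
    by (subst antipode_eq) simp
  then have "(s \<odot> idm H) \<bullet> Delta \<bullet> etar
      = (idm H \<odot> ((eps \<bullet> mur) \<odot> idm H)) \<bullet> ((dg \<bullet> eta) \<odot> (idm H \<odot> idm H)) \<bullet> Delta \<bullet> etar"
    by simp
  also have "\<dots> = (idm H \<odot> ((eps \<bullet> mur) \<odot> idm H)) \<bullet> ((dg \<bullet> eta) \<odot> (Delta \<bullet> etar))"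
    using slide_right by simp
  also have "\<dots> = ((idm H \<odot> ((eps \<bullet> mur) \<odot> idm H)) \<bullet> (idm H \<odot> (idm H \<odot> (Delta \<bullet> etar)))) \<bullet> dg \<bullet> eta"
    using slide_left by simp
  also have "\<dots> = dg \<bullet> eta"
    by (simp only: snake) (simp add: tn_id)
  finally show ?thesis by simp
qed

lemma red_cup_unit: "eps \<bullet> mur \<bullet> (idm H \<odot> eta) = eg"
proof -
  have "eps \<bullet> mur \<bullet> (idm H \<odot> eta) = eg \<bullet> mu \<bullet> (idm H \<odot> s) \<bullet> (idm H \<odot> eta)"
    using red_cup_eq by (simp flip: cp_assoc)
  also have "\<dots> = eg \<bullet> mu \<bullet> (idm H \<odot> (s \<bullet> eta))" by (simp add: whisker_left)
  finally show ?thesis using hopf_antipode_unit [OF hopf] is_monoidD(10) [OF green.monoid] by simp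
qed

lemma red_cup_unit_pairing:
  "\<phi> \<in> ar \<Longrightarrow> src \<phi> = H \<Longrightarrow> tgt \<phi> = U \<Longrightarrow> eps \<bullet> mur \<bullet> (idm H \<odot> (eta \<bullet> \<phi>)) = eg \<odot> \<phi>"
  using red_cup_unit tn_eq_right_then_left [of eg \<phi>] by (simp add: whisker_left flip: cp_assoc)

lemma red_cup_pairing_integral:
  assumes "\<phi> \<in> ar" "src \<phi> = H" "tgt \<phi> = U"
  shows "eps \<bullet> mur \<bullet> (idm H \<odot> ((idm H \<odot> \<phi>) \<bullet> Delta)) = \<phi> \<bullet> mur"
proof -
  note [simp] = assms
  have "eps \<bullet> mur \<bullet> (idm H \<odot> ((idm H \<odot> \<phi>) \<bullet> Delta))
      = (eps \<bullet> mur \<bullet> (idm H \<odot> (idm H \<odot> \<phi>))) \<bullet> (idm H \<odot> Delta)"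
    by (simp add: whisker_left)
  also have "\<dots> = ((eps \<bullet> mur) \<odot> \<phi>) \<bullet> (idm H \<odot> Delta)"
    using tn_eq_right_then_left [of "eps \<bullet> mur" \<phi>] by simp
  also have "\<dots> = \<phi> \<bullet> ((eps \<bullet> mur) \<odot> idm H) \<bullet> (idm H \<odot> Delta)"
    using tn_eq_left_then_right [of "eps \<bullet> mur" \<phi>] by simp
  finally show ?thesis using red.mult_from_cup_right by simp
qed

lemma green_counit_red_unit: "eg \<bullet> etar = idm U"
  and green_counit_red_mult: "eg \<bullet> mur = eg \<odot> eg"
  using is_hopfD(7,8) [OF dual_hopf] by simp_all

lemma green_counit_integral: "(idm H \<odot> eg) \<bullet> Delta = eta \<bullet> eg"
proof (rule red.cup_pairing_inj)
  show "eps \<bullet> mur \<bullet> (idm H \<odot> ((idm H \<odot> eg) \<bullet> Delta)) = eps \<bullet> mur \<bullet> (idm H \<odot> (eta \<bullet> eg))"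
    using red_cup_pairing_integral [of eg] red_cup_unit_pairing [of eg] green_counit_red_mult
    by simp
qed simp_all

lemma integral_unique:
  assumes "\<phi> \<in> ar" "src \<phi> = H" "tgt \<phi> = U"
    and integral: "(idm H \<odot> \<phi>) \<bullet> Delta = eta \<bullet> \<phi>"
  shows "\<phi> = eg \<odot> (\<phi> \<bullet> etar)"
proof -
  note [simp] = assms(1-3)
  have mult: "\<phi> \<bullet> mur = eg \<odot> \<phi>"
    using red_cup_pairing_integral [of \<phi>] red_cup_unit_pairing [of \<phi>] integral by simp
  have "\<phi> = (\<phi> \<bullet> mur) \<bullet> (idm H \<odot> etar)"
    using is_monoidD(10) [OF red.monoid] by simp
  also have "\<dots> = (eg \<bullet> idm H) \<odot> (\<phi> \<bullet> etar)"
    unfolding mult by (rule interchange [symmetric]) simp_all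
  finally show ?thesis by simp
qed

lemma red_mult_eq: "mur = (idm H \<odot> (eg \<bullet> mu \<bullet> (idm H \<odot> s))) \<bullet> (Delta \<odot> idm H)"
  using red.mult_from_cup_left red_cup_eq by simp

lemma green_comult_eq: "dg = (mu \<odot> idm H) \<bullet> (idm H \<odot> ((s \<odot> idm H) \<bullet> Delta \<bullet> etar))"
  using green.comult_from_cap green_cap_eq by simp

end

context smc
begin

lemma red_mult_rescale:
  assumes "hopf_frobenius C H mu eta dg eg mur etar Delta eps s"
    and "hopf_frobenius C H mu eta dg' eg' mur' etar' Delta eps s"
    and "eg' = eg \<odot> l" "scalar l"
  shows "mur' = mur \<odot> l"
proof -
  interpret A: hopf_frobenius_algebra C H mu eta dg eg mur etar Delta eps s
    using assms(1) by unfold_locales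
  interpret B: hopf_frobenius_algebra C H mu eta dg' eg' mur' etar' Delta eps s
    using assms(2) by unfold_locales
  have "eg' \<bullet> mu \<bullet> (idm H \<odot> s) = (eg \<bullet> mu \<bullet> (idm H \<odot> s)) \<odot> l"
    using assms(3,4) by (simp add: cp_tn_scalar_left scalar_def)
  then show ?thesis
    using A.red_mult_eq B.red_mult_eq assms(4)
      cp_tn_scalar_left [of "Delta \<odot> idm H" "idm H \<odot> (eg \<bullet> mu \<bullet> (idm H \<odot> s))" l]
    by (simp add: scalar_def)
qed

lemma green_comult_rescale:
  assumes "hopf_frobenius C H mu eta dg eg mur etar Delta eps s"
    and "hopf_frobenius C H mu eta dg' eg' mur' etar' Delta eps s"
    and "etar' = etar \<odot> l" "scalar l"
  shows "dg' = dg \<odot> l"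
proof -
  interpret A: hopf_frobenius_algebra C H mu eta dg eg mur etar Delta eps s
    using assms(1) by unfold_locales
  interpret B: hopf_frobenius_algebra C H mu eta dg' eg' mur' etar' Delta eps s
    using assms(2) by unfold_locales
  have "(s \<odot> idm H) \<bullet> Delta \<bullet> etar' = ((s \<odot> idm H) \<bullet> Delta \<bullet> etar) \<odot> l"
    using assms(3,4) by (simp add: cp_tn_scalar_right scalar_def)
  then show ?thesis
    using A.green_comult_eq B.green_comult_eq assms(4)
      cp_tn_scalar_right [of "idm H \<odot> ((s \<odot> idm H) \<bullet> Delta \<bullet> etar)" "mu \<odot> idm H" l]
    by (simp add: scalar_def)
qed

lemma hopf_frobenius_unique_up_to_scalar:
  assumes hf: "hopf_frobenius C H mu eta dg eg mur etar Delta eps s"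
    and hf': "hopf_frobenius C H mu eta dg' eg' mur' etar' Delta eps s"
  shows "(\<exists>l. invertible_scalar C l \<and> dg' = dg \<odot> l) \<and>
         (\<exists>l. invertible_scalar C l \<and> eg' = eg \<odot> l) \<and>
         (\<exists>l. invertible_scalar C l \<and> mur' = mur \<odot> l) \<and>
         (\<exists>l. invertible_scalar C l \<and> etar' = etar \<odot> l)"
proof -
  interpret A: hopf_frobenius_algebra C H mu eta dg eg mur etar Delta eps s
    using hf by unfold_locales
  interpret B: hopf_frobenius_algebra C H mu eta dg' eg' mur' etar' Delta eps s
    using hf' by unfold_locales
  define l where "l = eg' \<bullet> etar"
  define l' where "l' = eg \<bullet> etar'"
  have scalars: "scalar l" "scalar l'"
    unfolding l_def l'_def scalar_def by simp_all
  have eg': "eg' = eg \<odot> l"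
    unfolding l_def by (rule A.integral_unique [OF _ _ _ B.green_counit_integral]) simp_all
  have eg: "eg = eg' \<odot> l'"
    unfolding l'_def by (rule B.integral_unique [OF _ _ _ A.green_counit_integral]) simp_all
  have "l \<odot> l' = idm U"
    using cp_tn_scalar_left [of etar eg' l'] scalars eg A.green_counit_red_unit
    unfolding l_def by simp
  moreover have "l' \<odot> l = idm U"
    using cp_tn_scalar_left [of etar' eg l] scalars eg' B.green_counit_red_unit
    unfolding l'_def by simp
  ultimately have invertible: "invertible_scalar C l" "invertible_scalar C l'"
    using invertible_scalarI scalars by blast+
  have mur': "mur' = mur \<odot> l"
    by (rule red_mult_rescale [OF hf hf' eg' scalars(1)])
  have "mur = mur' \<odot> l'"
    by (rule red_mult_rescale [OF hf' hf eg scalars(2)])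
  then have etar': "etar' = etar \<odot> l'"
    by (rule monoid_unit_rescale [OF B.red.monoid A.red.monoid _ scalars(2)])
  have dg': "dg' = dg \<odot> l'"
    by (rule green_comult_rescale [OF hf hf' etar' scalars(2)])
  show ?thesis using invertible eg' mur' etar' dg' by blast
qed

end

theorem mainTheorem5:
  assumes "strict_smc C"
    and "is_hopf C H mu eta Delta eps s"
    and "hopf_frobenius C H mu eta dg eg mur etar Delta eps s"
    and "hopf_frobenius C H mu eta dg' eg' mur' etar' Delta eps s"
  shows "(\<exists>l. invertible_scalar C l \<and> dg' = mc_tar C dg l) \<and>
         (\<exists>l. invertible_scalar C l \<and> eg' = mc_tar C eg l) \<and>
         (\<exists>l. invertible_scalar C l \<and> mur' = mc_tar C mur l) \<and>
         (\<exists>l. invertible_scalar C l \<and> etar' = mc_tar C etar l)"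
  \<comment> \<open>The second hypothesis is already part of \<open>hopf_frobenius\<close>.\<close>
  using smc.hopf_frobenius_unique_up_to_scalar [OF smc.intro [OF assms(1)] assms(3,4)] .

end
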